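(* For any $n\times n$ completely positive semidefinite matrix $X$, $$\mathrm{cpsd}\text{-}\mathrm{rank}(X)\ge \frac{\left(\sum_{i=1}^n\sqrt{X_{ii}}\right)^2}{\sum_{i,j=1}^n X_{ij}}.$$
   Context: An $n\times n$ matrix $X$ is completely positive semidefinite (cpsd) if there exist $d\ge1$ and Hermitian positive semidefinite $d\times d$ matrices $P_1,\dots,P_n$ with $X_{ij}=\mathrm{Tr}(P_iP_j)$ for all $i,j$; the cpsd-rank of $X$ is the least such $d$. *)

theory Defs
  imports Complex_Main
begin

text \<open>Square d x d complex matrices are represented as functions nat => nat => complex,
  of which only the entries with indices below d are relevant.\<close>

definition hermitian_psd :: "nat \<Rightarrow> (nat \<Rightarrow> nat \<Rightarrow> complex) \<Rightarrow> bool" where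
  "hermitian_psd d P \<longleftrightarrow>
     (\<forall>i<d. \<forall>j<d. P i j = cnj (P j i)) \<and>
     (\<forall>v :: nat \<Rightarrow> complex. 0 \<le> Re (\<Sum>i<d. \<Sum>j<d. cnj (v i) * P i j * v j))"

definition trace_prod :: "nat \<Rightarrow> (nat \<Rightarrow> nat \<Rightarrow> complex) \<Rightarrow> (nat \<Rightarrow> nat \<Rightarrow> complex) \<Rightarrow> complex" where
  "trace_prod d P Q = (\<Sum>i<d. \<Sum>k<d. P i k * Q k i)"

definition cpsd_factorization :: "nat \<Rightarrow> (nat \<Rightarrow> nat \<Rightarrow> real) \<Rightarrow> nat \<Rightarrow> bool" where
  "cpsd_factorization n X d \<longleftrightarrow> d \<ge> 1 \<and>
     (\<exists>P :: nat \<Rightarrow> nat \<Rightarrow> nat \<Rightarrow> complex.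
        (\<forall>i<n. hermitian_psd d (P i)) \<and>
        (\<forall>i<n. \<forall>j<n. complex_of_real (X i j) = trace_prod d (P i) (P j)))"

definition cpsd :: "nat \<Rightarrow> (nat \<Rightarrow> nat \<Rightarrow> real) \<Rightarrow> bool" where
  "cpsd n X \<longleftrightarrow> (\<exists>d. cpsd_factorization n X d)"

definition cpsd_rank :: "nat \<Rightarrow> (nat \<Rightarrow> nat \<Rightarrow> real) \<Rightarrow> nat" where
  "cpsd_rank n X = (LEAST d. cpsd_factorization n X d)"

end

theory Submission
  imports Defs "HOL-Analysis.Convex"
begin

text \<open>For a cpsd factorization \<open>X\<^sub>i\<^sub>j = Tr(P\<^sub>i P\<^sub>j)\<close> with \<open>d \<times> d\<close> blocks, the psd matrices satisfy
  \<open>\<surd>X\<^sub>i\<^sub>i = \<parallel>P\<^sub>i\<parallel>\<^sub>F \<le> Tr P\<^sub>i\<close> (entrywise, the \<open>2 \<times> 2\<close> principal minors give \<open>|P\<^sub>a\<^sub>b|\<^sup>2 \<le> P\<^sub>a\<^sub>a P\<^sub>b\<^sub>b\<close>),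
  hence \<open>\<Sum>\<^sub>i \<surd>X\<^sub>i\<^sub>i \<le> Tr S\<close> for \<open>S = \<Sum>\<^sub>i P\<^sub>i\<close>. On the other hand
  \<open>\<Sum>\<^sub>i\<^sub>j X\<^sub>i\<^sub>j = Tr(S\<^sup>2) = \<parallel>S\<parallel>\<^sub>F\<^sup>2\<close> dominates the squared diagonal of \<open>S\<close>, which by Cauchy-Schwarz
  is at least \<open>(Tr S)\<^sup>2 / d\<close>.\<close>

definition hermitian :: "nat \<Rightarrow> (nat \<Rightarrow> nat \<Rightarrow> complex) \<Rightarrow> bool" where
  "hermitian d Q \<longleftrightarrow> (\<forall>a<d. \<forall>b<d. Q a b = cnj (Q b a))"

definition frobenius_sq :: "nat \<Rightarrow> (nat \<Rightarrow> nat \<Rightarrow> complex) \<Rightarrow> real" where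
  "frobenius_sq d Q = (\<Sum>a<d. \<Sum>b<d. (cmod (Q a b))\<^sup>2)"

lemma sum_lessThan_eq_single:
  fixes g :: "nat \<Rightarrow> 'a::comm_monoid_add"
  assumes "a < d" "\<And>k. k \<noteq> a \<Longrightarrow> g k = 0"
  shows "(\<Sum>k<d. g k) = g a"
  using assms by (subst sum.mono_neutral_right[of "{..<d}" "{a}"]) auto

lemma sum_lessThan_eq_pair:
  fixes g :: "nat \<Rightarrow> 'a::comm_monoid_add"
  assumes "a < d" "b < d" "a \<noteq> b" "\<And>k. k \<noteq> a \<Longrightarrow> k \<noteq> b \<Longrightarrow> g k = 0"
  shows "(\<Sum>k<d. g k) = g a + g b"
  using assms by (subst sum.mono_neutral_right[of "{..<d}" "{a, b}"]) auto

lemma nonneg_quadratic_imp_le: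
  fixes A B m :: real
  assumes "0 \<le> A" "0 \<le> B" and nonneg: "\<And>c. 0 \<le> c * c * A - 2 * c * m + B * m"
  shows "m \<le> A * B"
proof (rule ccontr)
  assume "\<not> m \<le> A * B"
  then have gt: "A * B < m" and m_pos: "0 < m"
    using assms(1,2) by (auto intro: order.strict_trans1[OF mult_nonneg_nonneg])
  show False
  proof (cases "A = 0")
    case True
    have "0 \<le> B * m" using assms(2) m_pos by simp
    with nonneg[of "B + 1"] True show False using m_pos by (simp add: algebra_simps)
  next
    case False
    with assms(1) have "0 < A" by simp
    have "0 \<le> (m / A) * (m / A) * A - 2 * (m / A) * m + B * m" by (rule nonneg)
    also have "\<dots> = m * (B - m / A)" using \<open>0 < A\<close> by (simp add: field_simps)
    also have "\<dots> < 0"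
      using gt m_pos \<open>0 < A\<close> by (intro mult_pos_neg) (simp_all add: field_simps mult.commute)
    finally show False by simp
  qed
qed

lemma hermitianD: "hermitian d Q \<Longrightarrow> a < d \<Longrightarrow> b < d \<Longrightarrow> Q a b = cnj (Q b a)"
  unfolding hermitian_def by blast

lemma hermitian_psd_imp_hermitian: "hermitian_psd d P \<Longrightarrow> hermitian d P"
  unfolding hermitian_psd_def hermitian_def by blast

lemma hermitian_psd_quadratic_form_nonneg:
  "hermitian_psd d P \<Longrightarrow> 0 \<le> Re (\<Sum>i<d. \<Sum>j<d. cnj (v i) * P i j * v j)"
  unfolding hermitian_psd_def by blast

lemma hermitian_diag_real:
  assumes "hermitian d Q" "a < d"
  shows "Q a a = complex_of_real (Re (Q a a))"
proof -
  have "Q a a = cnj (Q a a)" using hermitianD[OF assms(1,2,2)] .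
  then show ?thesis by (metis Reals_cnj_iff of_real_Re)
qed

lemma hermitian_psd_diag_nonneg:
  assumes "hermitian_psd d P" "a < d"
  shows "0 \<le> Re (P a a)"
proof -
  define v :: "nat \<Rightarrow> complex" where "v k = (if k = a then 1 else 0)" for k
  have "(\<Sum>j<d. cnj (v i) * P i j * v j) = cnj (v i) * P i a" for i
    by (subst sum_lessThan_eq_single[OF assms(2)]) (auto simp: v_def)
  then have "(\<Sum>i<d. \<Sum>j<d. cnj (v i) * P i j * v j) = (\<Sum>i<d. cnj (v i) * P i a)"
    by simp
  also have "\<dots> = P a a"
    by (subst sum_lessThan_eq_single[OF assms(2)]) (auto simp: v_def)
  finally show ?thesis using hermitian_psd_quadratic_form_nonneg[OF assms(1), of v] by simp
qed

lemma hermitian_psd_entry_bound: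
  assumes "hermitian_psd d P" "a < d" "b < d"
  shows "(cmod (P a b))\<^sup>2 \<le> Re (P a a) * Re (P b b)"
proof (cases "a = b")
  case True
  with hermitian_diag_real[OF hermitian_psd_imp_hermitian[OF assms(1)] assms(2)] show ?thesis
    by (metis norm_of_real power2_abs power2_eq_square order_refl)
next
  case False
  define A B m where "A = Re (P a a)" and "B = Re (P b b)" and "m = (cmod (P a b))\<^sup>2"
  have herm: "hermitian d P" using assms(1) by (rule hermitian_psd_imp_hermitian)
  have PA: "P a a = of_real A" and PB: "P b b = of_real B"
    using hermitian_diag_real[OF herm] assms(2,3) by (auto simp: A_def B_def)
  have Pba: "P b a = cnj (P a b)" using hermitianD[OF herm assms(3,2)] .
  have m: "P a b * cnj (P a b) = of_real m"
    by (simp add: m_def complex_norm_square[symmetric])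
  have "0 \<le> c * c * A - 2 * c * m + B * m" for c
  proof -
    \<comment> \<open>the quadratic form at \<open>c e\<^sub>a - P\<^sub>b\<^sub>a e\<^sub>b\<close>\<close>
    define v :: "nat \<Rightarrow> complex" where
      "v k = (if k = a then of_real c else if k = b then - P b a else 0)" for k
    have "(\<Sum>j<d. cnj (v i) * P i j * v j) = cnj (v i) * P i a * v a + cnj (v i) * P i b * v b"
      for i by (subst sum_lessThan_eq_pair[OF assms(2,3) False]) (auto simp: v_def)
    then have "(\<Sum>i<d. \<Sum>j<d. cnj (v i) * P i j * v j)
        = (\<Sum>i<d. cnj (v i) * P i a * v a + cnj (v i) * P i b * v b)"
      by simp
    also have "\<dots> = cnj (v a) * P a a * v a + cnj (v a) * P a b * v b
                  + (cnj (v b) * P b a * v a + cnj (v b) * P b b * v b)"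
      by (subst sum_lessThan_eq_pair[OF assms(2,3) False]) (auto simp: v_def)
    also have "\<dots> = of_real (c * c * A - 2 * c * m + B * m)"
      using False m by (simp add: v_def PA PB Pba algebra_simps)
    finally show ?thesis using hermitian_psd_quadratic_form_nonneg[OF assms(1), of v] by simp
  qed
  then show ?thesis
    using nonneg_quadratic_imp_le hermitian_psd_diag_nonneg[OF assms(1)] assms(2,3)
    by (simp add: A_def B_def m_def)
qed

lemma frobenius_sq_le_trace_sq:
  assumes "hermitian_psd d P"
  shows "frobenius_sq d P \<le> (\<Sum>a<d. Re (P a a))\<^sup>2"
proof -
  have "frobenius_sq d P \<le> (\<Sum>a<d. \<Sum>b<d. Re (P a a) * Re (P b b))"
    unfolding frobenius_sq_def using hermitian_psd_entry_bound[OF assms] by (intro sum_mono) auto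
  also have "\<dots> = (\<Sum>a<d. Re (P a a))\<^sup>2"
    by (simp add: power2_eq_square sum_product)
  finally show ?thesis .
qed

lemma frobenius_sq_nonneg: "0 \<le> frobenius_sq d Q"
  unfolding frobenius_sq_def by (intro sum_nonneg) simp

lemma trace_sq_le_dim_frobenius_sq:
  "(\<Sum>a<d. Re (Q a a))\<^sup>2 \<le> real d * frobenius_sq d Q"
proof -
  have "(\<Sum>a<d. Re (Q a a))\<^sup>2 \<le> real d * (\<Sum>a<d. (Re (Q a a))\<^sup>2)"
    using sum_squared_le_sum_of_squares[of "\<lambda>a. Re (Q a a)" "{..<d}"] by (simp add: mult.commute)
  also have "(\<Sum>a<d. (Re (Q a a))\<^sup>2) \<le> (\<Sum>a<d. (cmod (Q a a))\<^sup>2)"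
    by (intro sum_mono) (simp add: cmod_power2)
  also have "\<dots> \<le> frobenius_sq d Q"
    unfolding frobenius_sq_def by (intro sum_mono member_le_sum) auto
  finally show ?thesis by (simp add: mult_left_mono)
qed

lemma trace_prod_self_hermitian:
  assumes "hermitian d Q"
  shows "trace_prod d Q Q = of_real (frobenius_sq d Q)"
proof -
  have entry: "Q a b * Q b a = of_real ((cmod (Q a b))\<^sup>2)" if "a < d" "b < d" for a b
    using hermitianD[OF assms that(2,1)] by (simp add: complex_norm_square[symmetric])
  show ?thesis
    unfolding trace_prod_def frobenius_sq_def of_real_sum
    by (intro sum.cong refl) (rule entry; simp)
qed

lemma hermitian_sum:
  assumes "\<And>i. i < n \<Longrightarrow> hermitian d (P i)"
  shows "hermitian d (\<lambda>a b. \<Sum>i<n. P i a b)"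
  unfolding hermitian_def cnj_sum by (auto intro!: sum.cong hermitianD[OF assms])

lemma trace_prod_sum_sum:
  "(\<Sum>i<n. \<Sum>j<n. trace_prod d (P i) (P j)) =
   trace_prod d (\<lambda>a b. \<Sum>i<n. P i a b) (\<lambda>a b. \<Sum>i<n. P i a b)"
proof -
  have "(\<Sum>i<n. \<Sum>j<n. \<Sum>a<d. \<Sum>b<d. P i a b * P j b a)
      = (\<Sum>i<n. \<Sum>a<d. \<Sum>j<n. \<Sum>b<d. P i a b * P j b a)"
    by (intro sum.cong refl) (rule sum.swap)
  also have "\<dots> = (\<Sum>a<d. \<Sum>i<n. \<Sum>j<n. \<Sum>b<d. P i a b * P j b a)"
    by (rule sum.swap)
  also have "\<dots> = (\<Sum>a<d. \<Sum>b<d. \<Sum>i<n. \<Sum>j<n. P i a b * P j b a)"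
    by (intro sum.cong refl) (simp only: sum.swap[of _ "{..<n}" "{..<d}"])
  finally show ?thesis by (simp add: trace_prod_def sum_product)
qed

lemma cpsd_factorization_bound:
  assumes "cpsd_factorization n X d"
  shows "(\<Sum>i<n. sqrt (X i i))\<^sup>2 \<le> real d * (\<Sum>i<n. \<Sum>j<n. X i j)"
proof -
  obtain P where psd: "\<And>i. i < n \<Longrightarrow> hermitian_psd d (P i)"
    and X: "\<And>i j. i < n \<Longrightarrow> j < n \<Longrightarrow> of_real (X i j) = trace_prod d (P i) (P j)"
    using assms unfolding cpsd_factorization_def by blast
  define S where "S a b = (\<Sum>i<n. P i a b)" for a b
  have herm: "\<And>i. i < n \<Longrightarrow> hermitian d (P i)" using psd hermitian_psd_imp_hermitian by blast
  have "of_real (\<Sum>i<n. \<Sum>j<n. X i j) = trace_prod d S S"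
    unfolding of_real_sum S_def trace_prod_sum_sum[symmetric] by (simp add: X)
  also have "\<dots> = of_real (frobenius_sq d S)"
    unfolding S_def by (intro trace_prod_self_hermitian hermitian_sum herm)
  finally have total: "(\<Sum>i<n. \<Sum>j<n. X i j) = frobenius_sq d S" by (simp only: of_real_eq_iff)
  have diag: "X i i = frobenius_sq d (P i)" if "i < n" for i
    using X[OF that that] trace_prod_self_hermitian[OF herm[OF that]] by (metis of_real_eq_iff)
  have "sqrt (X i i) \<le> (\<Sum>a<d. Re (P i a a))" if "i < n" for i
  proof -
    have "0 \<le> (\<Sum>a<d. Re (P i a a))"
      using hermitian_psd_diag_nonneg[OF psd[OF that]] by (intro sum_nonneg) simp
    with frobenius_sq_le_trace_sq[OF psd[OF that]] show ?thesis
      by (simp add: diag[OF that] real_le_lsqrt)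
  qed
  then have "(\<Sum>i<n. sqrt (X i i)) \<le> (\<Sum>a<d. Re (S a a))"
    unfolding S_def Re_sum by (subst sum.swap) (intro sum_mono, simp)
  moreover have "0 \<le> (\<Sum>i<n. sqrt (X i i))"
    by (intro sum_nonneg) (simp add: diag frobenius_sq_nonneg)
  ultimately have "(\<Sum>i<n. sqrt (X i i))\<^sup>2 \<le> (\<Sum>a<d. Re (S a a))\<^sup>2"
    by (rule power_mono)
  also have "\<dots> \<le> real d * (\<Sum>i<n. \<Sum>j<n. X i j)"
    unfolding total by (rule trace_sq_le_dim_frobenius_sq)
  finally show ?thesis .
qed

theorem theorem3p8:
  fixes n :: nat and X :: "nat \<Rightarrow> nat \<Rightarrow> real"
  assumes "cpsd n X"
  shows "real (cpsd_rank n X) \<ge>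
           (\<Sum>i<n. sqrt (X i i))\<^sup>2 / (\<Sum>i<n. \<Sum>j<n. X i j)"
proof -
  have "cpsd_factorization n X (cpsd_rank n X)"
    using assms unfolding cpsd_def cpsd_rank_def by (rule LeastI_ex)
  then have bound: "(\<Sum>i<n. sqrt (X i i))\<^sup>2 \<le> real (cpsd_rank n X) * (\<Sum>i<n. \<Sum>j<n. X i j)"
    by (rule cpsd_factorization_bound)
  show ?thesis
  proof (cases "(\<Sum>i<n. \<Sum>j<n. X i j) > 0")
    case True
    with bound show ?thesis by (simp add: pos_divide_le_eq)
  next
    case False
    then have "(\<Sum>i<n. sqrt (X i i))\<^sup>2 / (\<Sum>i<n. \<Sum>j<n. X i j) \<le> 0"
      by (intro divide_nonneg_nonpos) simp_all
    then show ?thesis by simp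
  qed
qed

end
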